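(* Let $\{W_t\}_{t\ge0}$ be a standard Brownian motion, let $\{\rho_s\}_{s\ge0}$ be an initial term-structure density ($\rho_s=-\partial_sP_{0s}>0$, $\int_0^\infty\rho_s\,\mathrm ds=1$), and let $\{\phi_s\}_{s\ge0}$ be a deterministic function (the functional model parameter). Consider the Flesaker–Hughston model based on the GBM family $M_{ts}=\exp(\phi_sW_t-\tfrac12\phi_s^2t)$, with bond prices $$P_{tT}=\frac{\int_T^\infty\rho_s\exp(\phi_sW_t-\frac12\phi_s^2t)\,\mathrm ds}{\int_t^\infty\rho_s\exp(\phi_sW_t-\frac12\phi_s^2t)\,\mathrm ds}.$$ Define $$\Phi_{tT}=\frac{\int_T^\infty\phi_s\rho_s\exp(\phi_sW_t-\frac12\phi_s^2t)\,\mathrm ds}{\int_T^\infty\rho_s\exp(\phi_sW_t-\frac12\phi_s^2t)\,\mathrm ds},\qquad \Phi_{tt}=\lim_{s\to t}\Phi_{st},$$ the bond volatility $\Omega_{tT}=\Phi_{tT}-\Phi_{tt}$, the market price of risk $\lambda_t=-\Phi_{tt}$, and the risk premium $\lambda_t\Omega_{tT}=\Phi_{tt}(\Phi_{tt}-\Phi_{tT})$. If either $\{\phi_t\}$ is positive and decreasing, or $\{\phi_t\}$ is negative and increasing, then the risk premium $\lambda_t\Omega_{tT}$ is positive (for $0<t<T$). *)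

theory Defs
  imports "HOL-Analysis.Analysis"
begin

definition FH_M :: "(real \<Rightarrow> real) \<Rightarrow> real \<Rightarrow> real \<Rightarrow> real \<Rightarrow> real" where
  "FH_M \<phi> t w s = exp (\<phi> s * w - (\<phi> s)\<^sup>2 * t / 2)"

definition FH_P :: "(real \<Rightarrow> real) \<Rightarrow> (real \<Rightarrow> real) \<Rightarrow> (real \<Rightarrow> real) \<Rightarrow> real \<Rightarrow> real \<Rightarrow> real" where
  "FH_P \<phi> \<rho> W t T =
     (LINT s:{T..}|lborel. \<rho> s * FH_M \<phi> t (W t) s) /
     (LINT s:{t..}|lborel. \<rho> s * FH_M \<phi> t (W t) s)"

definition FH_Phi :: "(real \<Rightarrow> real) \<Rightarrow> (real \<Rightarrow> real) \<Rightarrow> (real \<Rightarrow> real) \<Rightarrow> real \<Rightarrow> real \<Rightarrow> real" where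
  "FH_Phi \<phi> \<rho> W t T =
     (LINT s:{T..}|lborel. \<phi> s * \<rho> s * FH_M \<phi> t (W t) s) /
     (LINT s:{T..}|lborel. \<rho> s * FH_M \<phi> t (W t) s)"

definition FH_Phi_tt :: "(real \<Rightarrow> real) \<Rightarrow> (real \<Rightarrow> real) \<Rightarrow> (real \<Rightarrow> real) \<Rightarrow> real \<Rightarrow> real" where
  "FH_Phi_tt \<phi> \<rho> W t = Lim (at t) (\<lambda>s. FH_Phi \<phi> \<rho> W s t)"

definition FH_Omega :: "(real \<Rightarrow> real) \<Rightarrow> (real \<Rightarrow> real) \<Rightarrow> (real \<Rightarrow> real) \<Rightarrow> real \<Rightarrow> real \<Rightarrow> real" where
  "FH_Omega \<phi> \<rho> W t T = FH_Phi \<phi> \<rho> W t T - FH_Phi_tt \<phi> \<rho> W t"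

definition FH_lambda :: "(real \<Rightarrow> real) \<Rightarrow> (real \<Rightarrow> real) \<Rightarrow> (real \<Rightarrow> real) \<Rightarrow> real \<Rightarrow> real" where
  "FH_lambda \<phi> \<rho> W t = - FH_Phi_tt \<phi> \<rho> W t"

end

(* \<Phi>_tT is the mean of \<phi> over [T, \<infinity>) with respect to the positive weights \<rho>_s M_ts, and by
   dominated convergence \<Phi>_tt is the same mean over [t, \<infinity>); hence the risk premium equals
   \<Phi>_tt (\<Phi>_tt - \<Phi>_tT). If \<phi> is positive and decreasing then \<Phi>_tt > 0, and \<Phi>_tt > \<Phi>_tT because
   on [t, T) the function \<phi> exceeds \<phi>_T, which bounds the mean over [T, \<infinity>) from above.
   The negative increasing case follows by changing the sign of \<phi>. *)

theory Submission
  imports Defs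
begin

lemma set_integral_pos:
  fixes f :: "real \<Rightarrow> real"
  assumes "{a..<b} \<subseteq> A" "a < b"
    and f: "set_integrable lborel A f" and pos: "\<forall>x\<in>A. f x > 0"
  shows "(LINT x:A|lborel. f x) > 0"
proof -
  let ?g = "\<lambda>x. indicator A x *\<^sub>R f x"
  have g: "integrable lborel ?g" using f by (simp add: set_integrable_def)
  have nonneg: "AE x in lborel. 0 \<le> ?g x"
    using pos by (intro AE_I2) (auto simp: indicator_def less_imp_le)
  have "(LINT x:A|lborel. f x) \<noteq> 0"
  proof
    assume "(LINT x:A|lborel. f x) = 0"
    then have "AE x in lborel. ?g x = 0"
      using integral_nonneg_eq_0_iff_AE[OF g nonneg] by (simp add: set_lebesgue_integral_def)
    then have "AE x in lborel. x \<notin> {a..<b}"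
      by eventually_elim (use assms in \<open>force simp: indicator_def\<close>)
    then have "{a..<b} \<in> null_sets lborel"
      by (simp add: AE_iff_null_sets)
    then show False using \<open>a < b\<close> by (simp add: null_sets_def)
  qed
  moreover have "0 \<le> (LINT x:A|lborel. f x)"
    unfolding set_lebesgue_integral_def using nonneg by (rule integral_nonneg_AE)
  ultimately show ?thesis by simp
qed

lemma tendsto_integral_dominated_at:
  fixes s :: "'c::first_countable_topology \<Rightarrow> 'a \<Rightarrow> 'b::{banach, second_countable_topology}"
    and w :: "'a \<Rightarrow> real"
  assumes "f \<in> borel_measurable M" "\<And>u. s u \<in> borel_measurable M" "integrable M w"
    and lim: "AE x in M. ((\<lambda>u. s u x) \<longlongrightarrow> f x) (at t)"
    and bound: "\<forall>\<^sub>F u in at t. AE x in M. norm (s u x) \<le> w x"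
  shows "((\<lambda>u. integral\<^sup>L M (s u)) \<longlongrightarrow> integral\<^sup>L M f) (at t)"
proof (rule tendsto_at_iff_sequentially[THEN iffD2], intro allI impI)
  fix X :: "nat \<Rightarrow> 'c" assume "\<forall>i. X i \<in> UNIV - {t}" and "X \<longlonglongrightarrow> t"
  then have X: "filterlim X (at t) sequentially" by (simp add: filterlim_at)
  from filterlim_iff[THEN iffD1, OF X, rule_format, OF bound]
  obtain N where w: "\<And>n. N \<le> n \<Longrightarrow> AE x in M. norm (s (X n) x) \<le> w x"
    by (auto simp: eventually_sequentially)
  have "(\<lambda>n. integral\<^sup>L M (s (X (n + N)))) \<longlonglongrightarrow> integral\<^sup>L M f"
  proof (rule integral_dominated_convergence)
    show "AE x in M. norm (s (X (n + N)) x) \<le> w x" for n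
      by (rule w) simp
    show "AE x in M. (\<lambda>n. s (X (n + N)) x) \<longlonglongrightarrow> f x"
      using lim by eventually_elim (rule LIMSEQ_ignore_initial_segment, rule filterlim_compose[OF _ X])
  qed (fact assms)+
  then show "((\<lambda>u. integral\<^sup>L M (s u)) \<circ> X) \<longlonglongrightarrow> integral\<^sup>L M f"
    unfolding comp_def by (rule LIMSEQ_offset[where f = "\<lambda>n. integral\<^sup>L M (s (X n))"])
qed

lemma borel_measurable_clamp:
  fixes f :: "real \<Rightarrow> real"
  assumes "mono_on {t..} f"
  shows "(\<lambda>s. f (max s t)) \<in> borel_measurable borel"
  using assms by (intro borel_measurable_mono) (auto simp: mono_def mono_on_def)

definition tail_mean :: "(real \<Rightarrow> real) \<Rightarrow> (real \<Rightarrow> real) \<Rightarrow> real \<Rightarrow> real" where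
  "tail_mean w \<psi> a = (LINT s:{a..}|lborel. \<psi> s * w s) / (LINT s:{a..}|lborel. w s)"

lemma tail_mean_uminus: "tail_mean w (\<lambda>s. - \<psi> s) a = - tail_mean w \<psi> a"
  unfolding tail_mean_def set_lebesgue_integral_def by simp

lemma tail_mean_pos:
  assumes "set_integrable lborel {a..} w" "set_integrable lborel {a..} (\<lambda>s. \<psi> s * w s)"
    and "\<forall>s\<ge>a. w s > 0" "\<forall>s\<ge>a. \<psi> s > 0"
  shows "tail_mean w \<psi> a > 0"
proof -
  have "(LINT s:{a..}|lborel. w s) > 0" "(LINT s:{a..}|lborel. \<psi> s * w s) > 0"
    using assms by (auto intro!: set_integral_pos[of a "a + 1"])
  then show ?thesis by (simp add: tail_mean_def)
qed

lemma tail_mean_strict_antimono: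
  assumes "t < T"
    and w: "set_integrable lborel {t..} w" and \<psi>w: "set_integrable lborel {t..} (\<lambda>s. \<psi> s * w s)"
    and w_pos: "\<forall>s\<ge>t. w s > 0" and dec: "strict_antimono_on {t..} \<psi>"
  shows "tail_mean w \<psi> T < tail_mean w \<psi> t"
proof -
  define D where "D A = (LINT s:A|lborel. w s)" for A
  define N where "N A = (LINT s:A|lborel. \<psi> s * w s)" for A
  have int_T: "set_integrable lborel {T..} w" "set_integrable lborel {T..} (\<lambda>s. \<psi> s * w s)"
    using \<open>t < T\<close> by (auto intro: set_integrable_subset[OF w] set_integrable_subset[OF \<psi>w])
  have int_tT: "set_integrable lborel {t..<T} w" "set_integrable lborel {t..<T} (\<lambda>s. \<psi> s * w s)"
    by (auto intro: set_integrable_subset[OF w] set_integrable_subset[OF \<psi>w])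
  have "{t..} = {t..<T} \<union> {T..}" using \<open>t < T\<close> by auto
  then have split: "D {t..} = D {t..<T} + D {T..}" "N {t..} = N {t..<T} + N {T..}"
    unfolding D_def N_def using int_T int_tT by (auto intro: set_integral_Un)
  have D_pos: "D {t..} > 0" "D {T..} > 0"
    unfolding D_def using \<open>t < T\<close> w int_T w_pos
    by (auto intro!: set_integral_pos[of t T] set_integral_pos[of T "T + 1"])
  (* the mean over [T..] is at most \<psi> T, while \<psi> > \<psi> T on [t..<T] *)
  have "N {T..} \<le> (LINT s:{T..}|lborel. \<psi> T * w s)"
    unfolding N_def
  proof (rule set_integral_mono[OF int_T(2)])
    show "set_integrable lborel {T..} (\<lambda>s. \<psi> T * w s)" using int_T(1) by simp
    fix s assume "s \<in> {T..}"
    then have "\<psi> s \<le> \<psi> T" "w s > 0" using dec w_pos \<open>t < T\<close> by (auto simp: le_less monotone_on_def)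
    then show "\<psi> s * w s \<le> \<psi> T * w s" by simp
  qed
  then have N_T: "N {T..} \<le> \<psi> T * D {T..}" by (simp add: D_def)
  have "(LINT s:{t..<T}|lborel. D {T..} * (\<psi> s * w s) - N {T..} * w s) > 0"
  proof (rule set_integral_pos[of t T])
    show "set_integrable lborel {t..<T} (\<lambda>s. D {T..} * (\<psi> s * w s) - N {T..} * w s)"
      using int_tT by (intro set_integral_diff) auto
    show "\<forall>s\<in>{t..<T}. D {T..} * (\<psi> s * w s) - N {T..} * w s > 0"
    proof
      fix s assume s: "s \<in> {t..<T}"
      then have "\<psi> T < \<psi> s" using dec by (auto simp: monotone_on_def)
      then have "N {T..} < \<psi> s * D {T..}"
        using N_T mult_strict_right_mono[OF _ D_pos(2)] by fastforce
      then show "D {T..} * (\<psi> s * w s) - N {T..} * w s > 0"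
        using w_pos s by (simp add: algebra_simps)
    qed
  qed (use \<open>t < T\<close> in auto)
  also have "(LINT s:{t..<T}|lborel. D {T..} * (\<psi> s * w s) - N {T..} * w s)
      = D {T..} * N {t..<T} - N {T..} * D {t..<T}"
    using int_tT by (simp add: set_integral_diff D_def N_def)
  finally have "N {T..} * D {t..} < N {t..} * D {T..}"
    using split by (simp add: algebra_simps)
  then show ?thesis
    using D_pos by (simp add: tail_mean_def D_def N_def divide_simps)
qed

definition strictly_shrinking_on :: "real set \<Rightarrow> (real \<Rightarrow> real) \<Rightarrow> bool" where
  "strictly_shrinking_on A \<phi> \<longleftrightarrow>
     (\<forall>s\<in>A. \<phi> s > 0) \<and> strict_antimono_on A \<phi> \<or> (\<forall>s\<in>A. \<phi> s < 0) \<and> strict_mono_on A \<phi>"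

lemma tail_mean_gap_pos:
  assumes "t < T"
    and w: "set_integrable lborel {t..} w" and \<phi>w: "set_integrable lborel {t..} (\<lambda>s. \<phi> s * w s)"
    and w_pos: "\<forall>s\<ge>t. w s > 0" and shrinking: "strictly_shrinking_on {t..} \<phi>"
  shows "tail_mean w \<phi> t * (tail_mean w \<phi> t - tail_mean w \<phi> T) > 0"
  using shrinking unfolding strictly_shrinking_on_def
proof
  assume pos: "(\<forall>s\<in>{t..}. \<phi> s > 0) \<and> strict_antimono_on {t..} \<phi>"
  then have "0 < tail_mean w \<phi> t"
    by (intro tail_mean_pos[OF w \<phi>w w_pos]) auto
  moreover have "tail_mean w \<phi> T < tail_mean w \<phi> t"
    using pos by (intro tail_mean_strict_antimono[OF \<open>t < T\<close> w \<phi>w w_pos]) auto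
  ultimately show ?thesis by simp
next
  assume neg: "(\<forall>s\<in>{t..}. \<phi> s < 0) \<and> strict_mono_on {t..} \<phi>"
  have neg_int: "set_integrable lborel {t..} (\<lambda>s. - \<phi> s * w s)"
    using set_integrable_mult_right[of "-1", OF \<phi>w] by simp
  have "strict_antimono_on {t..} (\<lambda>s. - \<phi> s)"
    using neg by (auto simp: monotone_on_def)
  then have "tail_mean w (\<lambda>s. - \<phi> s) T < tail_mean w (\<lambda>s. - \<phi> s) t"
    by (rule tail_mean_strict_antimono[OF \<open>t < T\<close> w neg_int w_pos])
  moreover have "0 < tail_mean w (\<lambda>s. - \<phi> s) t"
    by (rule tail_mean_pos[OF w neg_int w_pos]) (use neg in simp)
  ultimately show ?thesis by (simp add: tail_mean_uminus mult_neg_neg)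
qed

lemma FH_M_le:
  assumes "\<bar>\<phi> s\<bar> \<le> B"
  shows "FH_M \<phi> u x s \<le> exp (B * \<bar>x\<bar> + B\<^sup>2 * \<bar>u\<bar> / 2)"
proof -
  have "\<phi> s * x \<le> \<bar>\<phi> s\<bar> * \<bar>x\<bar>" by (metis abs_ge_self abs_mult)
  also have "\<dots> \<le> B * \<bar>x\<bar>" using assms by (simp add: mult_right_mono)
  finally have lin: "\<phi> s * x \<le> B * \<bar>x\<bar>" .
  have "(\<phi> s)\<^sup>2 * - u \<le> (\<phi> s)\<^sup>2 * \<bar>u\<bar>" by (intro mult_left_mono) auto
  also have "\<dots> \<le> B\<^sup>2 * \<bar>u\<bar>"
    using power_mono[OF assms abs_ge_zero, of 2] by (intro mult_right_mono) auto
  finally have quad: "(\<phi> s)\<^sup>2 * - u \<le> B\<^sup>2 * \<bar>u\<bar>" .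
  have "\<phi> s * x - (\<phi> s)\<^sup>2 * u / 2 \<le> B * \<bar>x\<bar> + B\<^sup>2 * \<bar>u\<bar> / 2"
    using lin quad by (simp add: field_simps)
  then show ?thesis unfolding FH_M_def by simp
qed

lemma abs_FH_M_integrand_le:
  assumes "\<bar>c s\<bar> \<le> K" "\<bar>\<phi> s\<bar> \<le> B"
  shows "\<bar>c s * \<rho> s * FH_M \<phi> u x s\<bar> \<le> K * exp (B * \<bar>x\<bar> + B\<^sup>2 * \<bar>u\<bar> / 2) * \<bar>\<rho> s\<bar>"
proof -
  have "\<bar>c s * \<rho> s * FH_M \<phi> u x s\<bar> = \<bar>c s\<bar> * FH_M \<phi> u x s * \<bar>\<rho> s\<bar>"
    by (simp add: abs_mult FH_M_def)
  also have "\<dots> \<le> K * exp (B * \<bar>x\<bar> + B\<^sup>2 * \<bar>u\<bar> / 2) * \<bar>\<rho> s\<bar>"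
    using assms FH_M_le[of \<phi> s B u x] by (intro mult_right_mono mult_mono) (auto simp: FH_M_def)
  finally show ?thesis .
qed

lemma set_borel_measurable_FH_M:
  assumes [measurable]: "c \<in> borel_measurable borel" "\<phi> \<in> borel_measurable borel"
    and "set_integrable lborel A \<rho>"
  shows "set_borel_measurable lborel A (\<lambda>s. c s * \<rho> s * FH_M \<phi> u x s)"
proof -
  have [measurable]: "(\<lambda>s. indicator A s *\<^sub>R \<rho> s) \<in> borel_measurable lborel"
    using assms(3) by (simp add: set_integrable_def borel_measurable_integrable)
  have "(\<lambda>s. c s * FH_M \<phi> u x s * (indicator A s *\<^sub>R \<rho> s)) \<in> borel_measurable lborel"
    unfolding FH_M_def by measurable
  then show ?thesis
    unfolding set_borel_measurable_def by (simp add: mult_ac)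
qed

lemma set_integrable_FH_M:
  assumes "c \<in> borel_measurable borel" "\<forall>s. \<bar>c s\<bar> \<le> K"
    and \<rho>: "set_integrable lborel A \<rho>"
    and "\<phi> \<in> borel_measurable borel" "\<forall>s. \<bar>\<phi> s\<bar> \<le> B"
  shows "set_integrable lborel A (\<lambda>s. c s * \<rho> s * FH_M \<phi> u x s)"
proof (rule set_integrable_bound)
  define C where "C = exp (B * \<bar>x\<bar> + B\<^sup>2 * \<bar>u\<bar> / 2)"
  show "set_integrable lborel A (\<lambda>s. K * C * \<rho> s)" using \<rho> by simp
  show "set_borel_measurable lborel A (\<lambda>s. c s * \<rho> s * FH_M \<phi> u x s)"
    using assms by (intro set_borel_measurable_FH_M)
  have "0 \<le> K" using assms(2) by (meson abs_ge_zero order.trans)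
  then have "\<bar>c s * \<rho> s * FH_M \<phi> u x s\<bar> \<le> \<bar>K * C * \<rho> s\<bar>" for s
    using abs_FH_M_integrand_le[of c s K \<phi> B \<rho> u x] assms by (simp add: abs_mult C_def)
  then show "AE s in lborel. s \<in> A \<longrightarrow> norm (c s * \<rho> s * FH_M \<phi> u x s) \<le> norm (K * C * \<rho> s)"
    by simp
qed

lemma tendsto_set_integral_FH_M:
  assumes c: "c \<in> borel_measurable borel" "\<forall>s. \<bar>c s\<bar> \<le> K"
    and \<rho>: "set_integrable lborel A \<rho>"
    and \<phi>: "\<phi> \<in> borel_measurable borel" "\<forall>s. \<bar>\<phi> s\<bar> \<le> B"
    and W: "isCont W t"
  shows "((\<lambda>u. LINT s:A|lborel. c s * \<rho> s * FH_M \<phi> u (W u) s)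
           \<longlongrightarrow> (LINT s:A|lborel. c s * \<rho> s * FH_M \<phi> t (W t) s)) (at t)"
proof -
  define F where "F u s = indicator A s *\<^sub>R (c s * \<rho> s * FH_M \<phi> u (W u) s)" for u s
  define C where "C = exp (B * (\<bar>W t\<bar> + 1) + B\<^sup>2 * (\<bar>t\<bar> + 1) / 2)"
  have B_nonneg: "0 \<le> B" using \<phi>(2) by (meson abs_ge_zero order.trans)
  have K_nonneg: "0 \<le> K" using c(2) by (meson abs_ge_zero order.trans)
  have F_measurable: "F u \<in> borel_measurable lborel" for u
    using set_borel_measurable_FH_M[OF c(1) \<phi>(1) \<rho>]
    by (simp add: set_borel_measurable_def F_def[abs_def])
  have W_lim: "(W \<longlongrightarrow> W t) (at t)" using W by (simp add: isCont_def)
  have "\<forall>\<^sub>F u in at t. dist (W u) (W t) < 1" "\<forall>\<^sub>F u in at t. dist u t < 1"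
    by (auto intro: tendstoD W_lim tendsto_ident_at)
  then have near: "\<forall>\<^sub>F u in at t. \<bar>W u\<bar> \<le> \<bar>W t\<bar> + 1 \<and> \<bar>u\<bar> \<le> \<bar>t\<bar> + 1"
    by eventually_elim (auto simp: dist_real_def)
  have "integrable lborel (\<lambda>s. K * C * \<bar>indicator A s *\<^sub>R \<rho> s\<bar>)"
    using \<rho> by (simp add: set_integrable_def)
  moreover have "AE s in lborel. ((\<lambda>u. F u s) \<longlongrightarrow> F t s) (at t)"
    using W_lim by (auto simp: F_def FH_M_def intro!: tendsto_intros)
  moreover from near have "\<forall>\<^sub>F u in at t. AE s in lborel. norm (F u s) \<le> K * C * \<bar>indicator A s *\<^sub>R \<rho> s\<bar>"
  proof eventually_elim
    case (elim u)
    show ?case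
    proof (rule AE_I2)
      fix s
      have "\<bar>c s * \<rho> s * FH_M \<phi> u (W u) s\<bar> \<le> K * exp (B * \<bar>W u\<bar> + B\<^sup>2 * \<bar>u\<bar> / 2) * \<bar>\<rho> s\<bar>"
        using c \<phi> by (intro abs_FH_M_integrand_le) auto
      also have "\<dots> \<le> K * C * \<bar>\<rho> s\<bar>"
        unfolding C_def using elim B_nonneg K_nonneg
        by (intro mult_right_mono mult_left_mono exp_mono add_mono divide_right_mono) auto
      finally show "norm (F u s) \<le> K * C * \<bar>indicator A s *\<^sub>R \<rho> s\<bar>"
        by (simp add: F_def indicator_def)
    qed
  qed
  ultimately have "((\<lambda>u. integral\<^sup>L lborel (F u)) \<longlongrightarrow> integral\<^sup>L lborel (F t)) (at t)"
    by (rule tendsto_integral_dominated_at[OF F_measurable F_measurable])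
  then show ?thesis
    by (simp add: set_lebesgue_integral_def F_def[abs_def])
qed

lemma FH_Phi_eq_tail_mean: "FH_Phi \<phi> \<rho> W t a = tail_mean (\<lambda>s. \<rho> s * FH_M \<phi> t (W t) s) \<phi> a"
  by (simp add: FH_Phi_def tail_mean_def mult.assoc)

lemma FH_Phi_cong:
  assumes "\<And>s. a \<le> s \<Longrightarrow> \<phi> s = \<phi>' s"
  shows "FH_Phi \<phi> \<rho> W u a = FH_Phi \<phi>' \<rho> W u a"
proof -
  have "FH_M \<phi> u (W u) s = FH_M \<phi>' u (W u) s" if "a \<le> s" for s
    using assms that by (simp add: FH_M_def)
  then have "(LINT s:{a..}|lborel. \<phi> s * \<rho> s * FH_M \<phi> u (W u) s)
      = (LINT s:{a..}|lborel. \<phi>' s * \<rho> s * FH_M \<phi>' u (W u) s)"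
    "(LINT s:{a..}|lborel. \<rho> s * FH_M \<phi> u (W u) s) = (LINT s:{a..}|lborel. \<rho> s * FH_M \<phi>' u (W u) s)"
    using assms by (auto intro!: set_lebesgue_integral_cong)
  then show ?thesis unfolding FH_Phi_def by simp
qed

lemma FH_Phi_tt_cong:
  assumes "\<And>s. t \<le> s \<Longrightarrow> \<phi> s = \<phi>' s"
  shows "FH_Phi_tt \<phi> \<rho> W t = FH_Phi_tt \<phi>' \<rho> W t"
  unfolding FH_Phi_tt_def using FH_Phi_cong[OF assms] by simp

lemma FH_Phi_tt_eq_FH_Phi:
  assumes W: "isCont W t" and \<rho>: "\<forall>s\<ge>t. \<rho> s > 0" "set_integrable lborel {t..} \<rho>"
    and \<phi>: "\<phi> \<in> borel_measurable borel" "\<forall>s. \<bar>\<phi> s\<bar> \<le> B"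
  shows "FH_Phi_tt \<phi> \<rho> W t = FH_Phi \<phi> \<rho> W t t"
proof -
  have one: "(\<lambda>_. 1::real) \<in> borel_measurable borel" "\<forall>s. \<bar>(\<lambda>_. 1::real) s\<bar> \<le> 1" by simp_all
  have "((\<lambda>u. FH_Phi \<phi> \<rho> W u t) \<longlongrightarrow> FH_Phi \<phi> \<rho> W t t) (at t)"
    unfolding FH_Phi_def
  proof (rule tendsto_divide)
    show "((\<lambda>u. LINT s:{t..}|lborel. \<phi> s * \<rho> s * FH_M \<phi> u (W u) s)
        \<longlongrightarrow> (LINT s:{t..}|lborel. \<phi> s * \<rho> s * FH_M \<phi> t (W t) s)) (at t)"
      by (rule tendsto_set_integral_FH_M[OF \<phi> \<rho>(2) \<phi> W])
    show "((\<lambda>u. LINT s:{t..}|lborel. \<rho> s * FH_M \<phi> u (W u) s)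
        \<longlongrightarrow> (LINT s:{t..}|lborel. \<rho> s * FH_M \<phi> t (W t) s)) (at t)"
      using tendsto_set_integral_FH_M[OF one \<rho>(2) \<phi> W] by simp
    have "set_integrable lborel {t..} (\<lambda>s. \<rho> s * FH_M \<phi> t (W t) s)"
      using set_integrable_FH_M[OF one \<rho>(2) \<phi>] by simp
    then show "(LINT s:{t..}|lborel. \<rho> s * FH_M \<phi> t (W t) s) \<noteq> 0"
      using \<rho>(1) by (intro less_imp_neq[symmetric] set_integral_pos[of t "t + 1"])
        (auto simp: FH_M_def)
  qed
  then show ?thesis
    unfolding FH_Phi_tt_def by (intro tendsto_Lim) simp_all
qed

lemma FH_risk_premium_eq_tail_mean:
  assumes "isCont W t" "\<forall>s\<ge>t. \<rho> s > 0" "set_integrable lborel {t..} \<rho>"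
    and "\<phi> \<in> borel_measurable borel" "\<forall>s. \<bar>\<phi> s\<bar> \<le> B"
  shows "FH_lambda \<phi> \<rho> W t * FH_Omega \<phi> \<rho> W t T
    = tail_mean (\<lambda>s. \<rho> s * FH_M \<phi> t (W t) s) \<phi> t
      * (tail_mean (\<lambda>s. \<rho> s * FH_M \<phi> t (W t) s) \<phi> t - tail_mean (\<lambda>s. \<rho> s * FH_M \<phi> t (W t) s) \<phi> T)"
  using FH_Phi_tt_eq_FH_Phi[OF assms]
  by (simp add: FH_lambda_def FH_Omega_def FH_Phi_eq_tail_mean algebra_simps)

lemma strictly_shrinking_on_clamp:
  assumes "strictly_shrinking_on {t..} \<phi>"
  shows "(\<lambda>s. \<phi> (max s t)) \<in> borel_measurable borel"
    and "\<bar>\<phi> (max s t)\<bar> \<le> \<bar>\<phi> t\<bar>"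
proof -
  consider (pos) "\<forall>s\<in>{t..}. \<phi> s > 0" "strict_antimono_on {t..} \<phi>"
    | (neg) "\<forall>s\<in>{t..}. \<phi> s < 0" "strict_mono_on {t..} \<phi>"
    using assms unfolding strictly_shrinking_on_def by blast
  then show "(\<lambda>s. \<phi> (max s t)) \<in> borel_measurable borel"
  proof cases
    case pos
    then have "mono_on {t..} (\<lambda>s. - \<phi> s)"
      by (intro strict_mono_on_imp_mono_on) (auto simp: monotone_on_def)
    then have "(\<lambda>s. - \<phi> (max s t)) \<in> borel_measurable borel"
      by (rule borel_measurable_clamp)
    then show ?thesis by simp
  next
    case neg
    then show ?thesis
      by (intro borel_measurable_clamp strict_mono_on_imp_mono_on) simp
  qed
  have "t \<le> max s t" by simp
  then have "\<phi> (max s t) = \<phi> t \<or> 0 < \<phi> (max s t) \<and> \<phi> (max s t) < \<phi> t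
      \<or> \<phi> t < \<phi> (max s t) \<and> \<phi> (max s t) < 0"
    using assms unfolding strictly_shrinking_on_def monotone_on_def
    by (cases "max s t = t") auto
  then show "\<bar>\<phi> (max s t)\<bar> \<le> \<bar>\<phi> t\<bar>" by linarith
qed

theorem proposition2:
  fixes W \<rho> \<phi> :: "real \<Rightarrow> real" and t T :: real
  assumes W_cont: "continuous_on UNIV W" and W0: "W 0 = 0"
    and rho_pos: "\<forall>s\<ge>0. \<rho> s > 0"
    and rho_int: "set_integrable lborel {0..} \<rho>"
    and rho_one: "(LINT s:{0..}|lborel. \<rho> s) = 1"
    and phi: "((\<forall>s\<ge>0. \<phi> s > 0) \<and> (\<forall>s s'. 0 \<le> s \<longrightarrow> s < s' \<longrightarrow> \<phi> s' < \<phi> s))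
            \<or> ((\<forall>s\<ge>0. \<phi> s < 0) \<and> (\<forall>s s'. 0 \<le> s \<longrightarrow> s < s' \<longrightarrow> \<phi> s < \<phi> s'))"
    and t: "0 < t" and tT: "t < T"
  shows "FH_lambda \<phi> \<rho> W t * FH_Omega \<phi> \<rho> W t T > 0"
  \<comment> \<open>\<open>W0\<close> and \<open>rho_one\<close> are normalisations the argument does not need.\<close>
proof -
  have W: "isCont W t"
    using W_cont by (simp add: continuous_on_eq_continuous_at)
  have \<rho>: "\<forall>s\<ge>t. \<rho> s > 0" "set_integrable lborel {t..} \<rho>"
    using rho_pos t by (auto intro: set_integrable_subset[OF rho_int])
  have shrinking: "strictly_shrinking_on {t..} \<phi>"
    using phi t by (auto simp: strictly_shrinking_on_def monotone_on_def)
  (* Only the values of \<phi> on [t..] enter; clamping gives the global measurability and bound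
     that dominated convergence needs. *)
  define \<phi>' where "\<phi>' s = \<phi> (max s t)" for s
  have \<phi>'_eq: "\<phi>' s = \<phi> s" if "t \<le> s" for s using that by (simp add: \<phi>'_def)
  have \<phi>': "\<phi>' \<in> borel_measurable borel" "\<forall>s. \<bar>\<phi>' s\<bar> \<le> \<bar>\<phi> t\<bar>"
    using strictly_shrinking_on_clamp[OF shrinking] by (simp_all add: \<phi>'_def[abs_def])
  define w where "w = (\<lambda>s. \<rho> s * FH_M \<phi>' t (W t) s)"
  have w: "set_integrable lborel {t..} w" "set_integrable lborel {t..} (\<lambda>s. \<phi>' s * w s)"
    using set_integrable_FH_M[of "\<lambda>_. 1" 1, OF _ _ \<rho>(2) \<phi>'] set_integrable_FH_M[OF \<phi>' \<rho>(2) \<phi>']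
    by (simp_all add: w_def mult.assoc)
  have "strictly_shrinking_on {t..} \<phi>'"
    using shrinking by (simp add: strictly_shrinking_on_def monotone_on_def \<phi>'_eq)
  then have gap: "tail_mean w \<phi>' t * (tail_mean w \<phi>' t - tail_mean w \<phi>' T) > 0"
    using \<rho>(1) by (intro tail_mean_gap_pos[OF tT w]) (auto simp: w_def FH_M_def)
  have clamped: "FH_lambda \<phi>' \<rho> W t * FH_Omega \<phi>' \<rho> W t T
      = tail_mean w \<phi>' t * (tail_mean w \<phi>' t - tail_mean w \<phi>' T)"
    unfolding w_def by (rule FH_risk_premium_eq_tail_mean[OF W \<rho> \<phi>'])
  have "FH_lambda \<phi>' \<rho> W t * FH_Omega \<phi>' \<rho> W t T = FH_lambda \<phi> \<rho> W t * FH_Omega \<phi> \<rho> W t T"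
    using FH_Phi_tt_cong[of t \<phi>' \<phi>] FH_Phi_cong[of t \<phi>' \<phi>] FH_Phi_cong[of T \<phi>' \<phi>] \<phi>'_eq tT
    by (simp add: FH_lambda_def FH_Omega_def)
  with gap clamped show ?thesis by simp
qed

end
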